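(* Let $Br_n^+\subseteq SB_n^+$ denote the submonoid generated by $\sigma_1,\dots,\sigma_{n-1}$. For every element $w\in SB_n^+$ there exists a unique greatest left divisor of $w$ belonging to $Br_n^+$: that is, there is a unique $d\in Br_n^+$ with $w=du$ for some $u\in SB_n^+$ such that every $a\in Br_n^+$ with $w=av$ for some $v\in SB_n^+$ satisfies $d=ab$ for some $b\in SB_n^+$. The analogous statement holds for right divisors.
   Context: Fix $n\ge 2$. The positive singular braid monoid $SB_n^+$ is the monoid with generators $\sigma_1,\dots,\sigma_{n-1},x_1,\dots,x_{n-1}$ and relations: $\sigma_i\sigma_j=\sigma_j\sigma_i$ and $x_ix_j=x_jx_i$ if $|i-j|>1$; $x_i\sigma_j=\sigma_jx_i$ if $|i-j|\ne 1$; $\sigma_i\sigma_{i+1}\sigma_i=\sigma_{i+1}\sigma_i\sigma_{i+1}$; $\sigma_i\sigma_{i+1}x_i=x_{i+1}\sigma_i\sigma_{i+1}$; $\sigma_{i+1}\sigma_ix_{i+1}=x_i\sigma_{i+1}\sigma_i$. *)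

theory Defs
  imports Main
begin

text \<open>Generators of the positive singular braid monoid: Sg i = sigma_i, Xg i = x_i.\<close>
datatype gen = Sg nat | Xg nat

definition valid :: "nat \<Rightarrow> gen list \<Rightarrow> bool" where
  "valid n w \<longleftrightarrow> (\<forall>g\<in>set w. case g of Sg i \<Rightarrow> 1 \<le> i \<and> i < n | Xg i \<Rightarrow> 1 \<le> i \<and> i < n)"

text \<open>Words using only the sigma generators (representatives of elements of Br_n^+).\<close>
definition braid_word :: "gen list \<Rightarrow> bool" where
  "braid_word w \<longleftrightarrow> (\<forall>g\<in>set w. \<exists>i. g = Sg i)"

definition rels :: "nat \<Rightarrow> (gen list \<times> gen list) set" where
  "rels n =
     {([Sg i, Sg j], [Sg j, Sg i]) | i j. 1 \<le> i \<and> i < n \<and> 1 \<le> j \<and> j < n \<and> (i + 1 < j \<or> j + 1 < i)}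
   \<union> {([Xg i, Xg j], [Xg j, Xg i]) | i j. 1 \<le> i \<and> i < n \<and> 1 \<le> j \<and> j < n \<and> (i + 1 < j \<or> j + 1 < i)}
   \<union> {([Xg i, Sg j], [Sg j, Xg i]) | i j. 1 \<le> i \<and> i < n \<and> 1 \<le> j \<and> j < n \<and> j \<noteq> i + 1 \<and> i \<noteq> j + 1}
   \<union> {([Sg i, Sg (i+1), Sg i], [Sg (i+1), Sg i, Sg (i+1)]) | i. 1 \<le> i \<and> i + 1 < n}
   \<union> {([Sg i, Sg (i+1), Xg i], [Xg (i+1), Sg i, Sg (i+1)]) | i. 1 \<le> i \<and> i + 1 < n}
   \<union> {([Sg (i+1), Sg i, Xg (i+1)], [Xg i, Sg (i+1), Sg i]) | i. 1 \<le> i \<and> i + 1 < n}"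

text \<open>The monoid congruence on words generated by the relations: two words are equal
  in SB_n^+ iff they are related by sbeq n.\<close>
inductive sbeq :: "nat \<Rightarrow> gen list \<Rightarrow> gen list \<Rightarrow> bool" for n where
  refl: "sbeq n w w"
| sym: "sbeq n u v \<Longrightarrow> sbeq n v u"
| trans: "sbeq n u v \<Longrightarrow> sbeq n v w \<Longrightarrow> sbeq n u w"
| step: "(l, r) \<in> rels n \<Longrightarrow> sbeq n (u @ l @ v) (u @ r @ v)"

definition greatest_left_braid_divisor :: "nat \<Rightarrow> gen list \<Rightarrow> gen list \<Rightarrow> bool" where
  "greatest_left_braid_divisor n w d \<longleftrightarrow>
     valid n d \<and> braid_word d \<and> (\<exists>u. valid n u \<and> sbeq n w (d @ u)) \<and>
     (\<forall>a v. valid n a \<and> braid_word a \<and> valid n v \<and> sbeq n w (a @ v)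
        \<longrightarrow> (\<exists>b. valid n b \<and> sbeq n d (a @ b)))"

definition greatest_right_braid_divisor :: "nat \<Rightarrow> gen list \<Rightarrow> gen list \<Rightarrow> bool" where
  "greatest_right_braid_divisor n w d \<longleftrightarrow>
     valid n d \<and> braid_word d \<and> (\<exists>u. valid n u \<and> sbeq n w (u @ d)) \<and>
     (\<forall>a v. valid n a \<and> braid_word a \<and> valid n v \<and> sbeq n w (v @ a)
        \<longrightarrow> (\<exists>b. valid n b \<and> sbeq n d (b @ a)))"

end

theory Submission
  imports Defs
begin

text \<open>The presentation of \<open>SB\<^sub>n\<^sup>+\<close> is complemented: for two distinct generators \<open>s, t\<close> there
  is at most one relation of the form \<open>s f = t g\<close>. The relations satisfy Dehornoy's cube
  condition, which is checked exhaustively on triples of generators; by induction on the length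
  it follows that \<open>s u = t v\<close> in \<open>SB\<^sub>n\<^sup>+\<close> forces \<open>u = f z\<close> and \<open>v = g z\<close> for some \<open>z\<close>.
  The complement of two generators \<open>\<sigma>\<^sub>i, \<sigma>\<^sub>j\<close> consists of \<open>\<sigma>\<close>'s again, so any two left divisors
  \<open>a, b \<in> Br\<^sub>n\<^sup>+\<close> of \<open>w\<close> have a common right multiple in \<open>Br\<^sub>n\<^sup>+\<close> that still left-divides \<open>w\<close>.
  Hence a left divisor in \<open>Br\<^sub>n\<^sup>+\<close> of maximal length is a multiple of every other one, and it is
  unique because the relations preserve length. The relations are closed under reversing words,
  which turns right divisors into left divisors.\<close>

declare sbeq.trans [trans]

lemma sbeq_length: "sbeq n u v \<Longrightarrow> length u = length v"
  by (induction rule: sbeq.induct) (auto simp: rels_def)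

lemma sbeq_append_cong: "sbeq n u v \<Longrightarrow> sbeq n (p @ u @ q) (p @ v @ q)"
proof (induction rule: sbeq.induct)
  case (step l r u v)
  then have "sbeq n ((p @ u) @ l @ (v @ q)) ((p @ u) @ r @ (v @ q))"
    by (rule sbeq.step)
  then show ?case by simp
qed (auto intro: sbeq.intros)

lemma sbeq_append_left: "sbeq n u v \<Longrightarrow> sbeq n (p @ u) (p @ v)"
  using sbeq_append_cong[of n u v p "[]"] by simp

lemma sbeq_append_right: "sbeq n u v \<Longrightarrow> sbeq n (u @ q) (v @ q)"
  using sbeq_append_cong[of n u v "[]" q] by simp

lemma sbeq_Cons: "sbeq n u v \<Longrightarrow> sbeq n (x # u) (x # v)"
  using sbeq_append_left[of n u v "[x]"] by simp

lemma valid_append [simp]: "valid n (a @ b) \<longleftrightarrow> valid n a \<and> valid n b"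
  by (auto simp: valid_def)

lemma valid_rev [simp]: "valid n (rev a) \<longleftrightarrow> valid n a"
  by (simp add: valid_def)

lemma sbeq_valid: "sbeq n u v \<Longrightarrow> valid n u \<longleftrightarrow> valid n v"
  by (induction rule: sbeq.induct) (auto simp: rels_def valid_def)

lemma braid_word_simps [simp]:
  "braid_word []"
  "braid_word (x # a) \<longleftrightarrow> (\<exists>i. x = Sg i) \<and> braid_word a"
  "braid_word (a @ b) \<longleftrightarrow> braid_word a \<and> braid_word b"
  "braid_word (rev a) \<longleftrightarrow> braid_word a"
  by (auto simp: braid_word_def)

lemma rels_rev: "(l, r) \<in> rels n \<Longrightarrow> (rev l, rev r) \<in> rels n \<or> (rev r, rev l) \<in> rels n"
  unfolding rels_def by auto

lemma sbeq_rev: "sbeq n u v \<Longrightarrow> sbeq n (rev u) (rev v)"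
proof (induction rule: sbeq.induct)
  case (step l r u v)
  then have "sbeq n (rev v @ rev l @ rev u) (rev v @ rev r @ rev u)"
    using rels_rev sbeq.step sbeq.sym by blast
  then show ?case by simp
qed (auto intro: sbeq.intros)

lemma sbeq_rev_iff: "sbeq n (rev u) (rev v) \<longleftrightarrow> sbeq n u v"
  using sbeq_rev[of n "rev u" "rev v"] sbeq_rev[of n u v] by auto

fun valid_gen :: "nat \<Rightarrow> gen \<Rightarrow> bool" where
  "valid_gen n (Sg i) \<longleftrightarrow> 1 \<le> i \<and> i < n"
| "valid_gen n (Xg i) \<longleftrightarrow> 1 \<le> i \<and> i < n"

text \<open>\<open>gen_complement s t = Some (f, g)\<close> encodes the relation \<open>s f = t g\<close>; \<open>None\<close> means that no
  relation of the presentation starts with \<open>s\<close> on one side and with \<open>t\<close> on the other.\<close>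

fun gen_complement :: "gen \<Rightarrow> gen \<Rightarrow> (gen list \<times> gen list) option" where
  "gen_complement (Sg i) (Sg j) =
     (if i + 1 < j \<or> j + 1 < i then Some ([Sg j], [Sg i])
      else if j = i + 1 \<or> i = j + 1 then Some ([Sg j, Sg i], [Sg i, Sg j]) else None)"
| "gen_complement (Xg i) (Xg j) =
     (if i + 1 < j \<or> j + 1 < i then Some ([Xg j], [Xg i]) else None)"
| "gen_complement (Sg i) (Xg j) =
     (if j = i + 1 then Some ([Sg (i+1), Xg i], [Sg i, Sg (i+1)])
      else if i = j + 1 then Some ([Sg j, Xg i], [Sg i, Sg j]) else Some ([Xg j], [Sg i]))"
| "gen_complement (Xg j) (Sg i) =
     (if j = i + 1 then Some ([Sg i, Sg (i+1)], [Sg (i+1), Xg i])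
      else if i = j + 1 then Some ([Sg i, Sg j], [Sg j, Xg i]) else Some ([Sg i], [Xg j]))"

definition complement :: "nat \<Rightarrow> gen \<Rightarrow> gen \<Rightarrow> (gen list \<times> gen list) option" where
  "complement n s t =
     (if s = t then Some ([], [])
      else if valid_gen n s \<and> valid_gen n t then gen_complement s t else None)"

lemma complement_self: "complement n s s = Some ([], [])"
  by (simp add: complement_def)

lemma complement_swap: "complement n s t = Some (f, g) \<Longrightarrow> complement n t s = Some (g, f)"
proof -
  have "gen_complement t s = map_option (\<lambda>(f, g). (g, f)) (gen_complement s t)"
    by (cases s; cases t) auto
  then show "complement n s t = Some (f, g) \<Longrightarrow> complement n t s = Some (g, f)"
    by (auto simp: complement_def split: if_splits)
qed

lemma complement_Sg_braid_word:
  "complement n (Sg i) (Sg j) = Some (f, g) \<Longrightarrow> braid_word f \<and> braid_word g"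
  by (auto simp: complement_def split: if_splits)

lemma rels_complement: "(s # f, t # g) \<in> rels n \<Longrightarrow> complement n s t = Some (f, g)"
  unfolding rels_def complement_def by auto

lemma rels_nonempty: "(l, r) \<in> rels n \<Longrightarrow> l \<noteq> [] \<and> r \<noteq> []"
  unfolding rels_def by auto

lemma complement_sbeq: "complement n s t = Some (f, g) \<Longrightarrow> sbeq n (s # f) (t # g)"
proof (cases "s = t")
  case False
  assume "complement n s t = Some (f, g)"
  with False have "(s # f, t # g) \<in> rels n \<or> (t # g, s # f) \<in> rels n"
    unfolding complement_def rels_def by (cases s; cases t) (auto split: if_splits)
  then show ?thesis
    using sbeq.step[of _ _ n "[]" "[]"] sbeq.sym by fastforce
qed (auto simp: complement_def intro: sbeq.refl)

subsection \<open>Word reversing\<close>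

datatype reversing_result = Reversed "gen list" "gen list" | Clash | Out_Of_Fuel

text \<open>Right reversing of \<open>a\<inverse> b\<close>: \<open>Reversed c d\<close> means that it ends in \<open>c d\<inverse>\<close>, so that
  \<open>a c = b d\<close>; the fuel \<open>k\<close> bounds the depth of the recursion.\<close>

fun reversing :: "nat \<Rightarrow> nat \<Rightarrow> gen list \<Rightarrow> gen list \<Rightarrow> reversing_result" where
  "reversing n k [] b = Reversed b []"
| "reversing n k (x # a) [] = Reversed [] (x # a)"
| "reversing n 0 (x # a) (y # b) = Out_Of_Fuel"
| "reversing n (Suc k) (x # a) (y # b) =
     (case complement n x y of
        None \<Rightarrow> Clash
      | Some (f, g) \<Rightarrow>
          (case reversing n k a f of
             Reversed c1 d1 \<Rightarrow>
               (case reversing n k (g @ d1) b of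
                  Reversed c2 d2 \<Rightarrow> Reversed (c1 @ c2) d2
                | r \<Rightarrow> r)
           | r \<Rightarrow> r))"

lemma reversing_sbeq: "reversing n k a b = Reversed c d \<Longrightarrow> sbeq n (a @ c) (b @ d)"
proof (induction n k a b arbitrary: c d rule: reversing.induct)
  case (4 n k x a y b)
  then obtain f g c1 d1 c2 d2 where fg: "complement n x y = Some (f, g)"
    and r1: "reversing n k a f = Reversed c1 d1" and r2: "reversing n k (g @ d1) b = Reversed c2 d2"
    and cd: "c = c1 @ c2" "d = d2"
    by (auto split: option.splits reversing_result.splits)
  have "sbeq n (x # a @ c1 @ c2) (x # f @ d1 @ c2)"
    using sbeq_Cons[OF sbeq_append_right[OF "4.IH"(1)[OF fg HOL.refl r1]]] by simp
  also have "sbeq n \<dots> (y # g @ d1 @ c2)"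
    using sbeq_append_right[OF complement_sbeq[OF fg]] by simp
  also have "sbeq n \<dots> (y # b @ d2)"
    using sbeq_Cons "4.IH"(2)[OF fg HOL.refl r1 r2] by simp
  finally show ?case using cd by simp
qed (auto intro: sbeq.refl)

definition factors_via_complement :: "nat \<Rightarrow> gen \<Rightarrow> gen list \<Rightarrow> gen \<Rightarrow> gen list \<Rightarrow> bool" where
  "factors_via_complement n s u t v \<longleftrightarrow>
     (\<exists>f g z. complement n s t = Some (f, g) \<and> sbeq n u (f @ z) \<and> sbeq n v (g @ z))"

text \<open>Completeness of reversing is proved relative to the factorisation property for shorter
  words; the two are then established together by induction on the length.\<close>

lemma reversing_complete:
  assumes "\<And>s u t v. length u < L \<Longrightarrow> sbeq n (s # u) (t # v) \<Longrightarrow>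
      factors_via_complement n s u t v"
    and "length (a @ x) \<le> L" and "sbeq n (a @ x) (b @ y)"
  shows "reversing n k a b \<noteq> Clash \<and>
    (reversing n k a b = Reversed c d \<longrightarrow> (\<exists>z. sbeq n x (c @ z) \<and> sbeq n y (d @ z)))"
  using assms
proof (induction n k a b arbitrary: x y c d rule: reversing.induct)
  case (2 n k s a)
  then show ?case using sbeq.refl sbeq.sym by fastforce
next
  case (4 n k s a t b)
  note shorter = "4.prems"(1)
  obtain f g z where fg: "complement n s t = Some (f, g)"
    and az: "sbeq n (a @ x) (f @ z)" and bz: "sbeq n (b @ y) (g @ z)"
    using shorter[of "a @ x" s t "b @ y"] "4.prems"(2,3) by (auto simp: factors_via_complement_def)
  note IH1 = "4.IH"(1)[OF fg HOL.refl shorter _ az]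
  show ?case
  proof (cases "reversing n k a f")
    case (Reversed c1 d1)
    then obtain z1 where xz1: "sbeq n x (c1 @ z1)" and zz1: "sbeq n z (d1 @ z1)"
      using IH1 "4.prems"(2) by auto
    have gb: "sbeq n (g @ d1 @ z1) (b @ y)"
      using sbeq.sym[OF sbeq_append_left[OF zz1, of g]] sbeq.sym[OF bz] by (auto intro: sbeq.trans)
    moreover have "length (g @ d1 @ z1) \<le> L"
      using sbeq_length[OF gb] sbeq_length[OF "4.prems"(3)] "4.prems"(2) by simp
    ultimately have IH2: "reversing n k (g @ d1) b \<noteq> Clash \<and>
        (reversing n k (g @ d1) b = Reversed c2 d2 \<longrightarrow> (\<exists>z. sbeq n z1 (c2 @ z) \<and> sbeq n y (d2 @ z)))"
      for c2 d2
      using "4.IH"(2)[OF fg HOL.refl Reversed shorter, of z1 y] by simp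
    show ?thesis
    proof (cases "reversing n k (g @ d1) b")
      case (Reversed c2 d2)
      then obtain z2 where "sbeq n z1 (c2 @ z2)" "sbeq n y (d2 @ z2)"
        using IH2 by auto
      moreover have "sbeq n x (c1 @ c2 @ z2)"
        using xz1 sbeq_append_left[OF \<open>sbeq n z1 (c2 @ z2)\<close>] by (rule sbeq.trans)
      ultimately show ?thesis
        using fg \<open>reversing n k a f = Reversed c1 d1\<close> Reversed by auto
    qed (use IH2 fg \<open>reversing n k a f = Reversed c1 d1\<close> in auto)
  qed (use IH1 "4.prems"(2) fg in auto)
qed (auto intro: sbeq.refl)

subsection \<open>The cube condition\<close>

text \<open>Dehornoy's cube condition for the generators \<open>s, t, r\<close>: the relations \<open>s f\<^sub>1 = t g\<^sub>1\<close>
  and \<open>t g\<^sub>2 = r h\<^sub>2\<close>, completed by reversing \<open>g\<^sub>1\<inverse> g\<^sub>2\<close> to \<open>c d\<inverse>\<close>, give a common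
  multiple \<open>s f\<^sub>1 c = r h\<^sub>2 d\<close> that is a multiple of the complement \<open>s f\<^sub>3 = r h\<^sub>3\<close>.
  A clash is harmless, since it cannot occur for words that are equal in the monoid.\<close>

definition cube_condition :: "nat \<Rightarrow> gen \<Rightarrow> gen \<Rightarrow> gen \<Rightarrow> bool" where
  "cube_condition n s t r =
     (case (complement n s t, complement n t r) of
        (Some (f1, g1), Some (g2, h2)) \<Rightarrow>
          (case reversing n 5 g1 g2 of
             Clash \<Rightarrow> True
           | Out_Of_Fuel \<Rightarrow> False
           | Reversed c d \<Rightarrow>
               (case complement n s r of
                  None \<Rightarrow> False
                | Some (f3, h3) \<Rightarrow>
                    (case reversing n 5 f3 (f1 @ c) of
                       Reversed e e' \<Rightarrow> e' = [] \<and> reversing n 5 (h2 @ d) (h3 @ e) = Reversed [] []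
                     | _ \<Rightarrow> False)))
      | _ \<Rightarrow> True)"

lemma nat_cases_adjacent:
  obtains "i = j" | "j = i + 1" | "i = j + 1" | "i + 1 < j" | "j + 1 < (i::nat)"
  by linarith

lemma cube_condition_gens:
  assumes "G \<in> {Sg, Xg}" "H \<in> {Sg, Xg}" "K \<in> {Sg, Xg}"
  shows "cube_condition n (G i) (H j) (K k)"
  using assms
  apply (elim insertE emptyE)
  apply (simp_all only:)
  apply (rule nat_cases_adjacent[of i j]; rule nat_cases_adjacent[of j k];
      rule nat_cases_adjacent[of i k]; simp add: cube_condition_def complement_def numeral_eq_Suc)+
  done

lemma cube_condition_holds: "cube_condition n s t r"
proof -
  have "\<exists>G i. G \<in> {Sg, Xg} \<and> x = G i" for x
    by (cases x) auto
  then show ?thesis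
    using cube_condition_gens by metis
qed

lemma cube_condition_reversing:
  assumes "complement n s t = Some (f1, g1)" and "complement n t r = Some (g2, h2)"
  shows "reversing n 5 g1 g2 \<noteq> Out_Of_Fuel"
    and "reversing n 5 g1 g2 = Reversed c d \<Longrightarrow> \<exists>f3 h3 e. complement n s r = Some (f3, h3) \<and>
      sbeq n (f1 @ c) (f3 @ e) \<and> sbeq n (h2 @ d) (h3 @ e)"
proof -
  note cube = cube_condition_holds[of n s t r, unfolded cube_condition_def assms prod.case option.case]
  then show "reversing n 5 g1 g2 \<noteq> Out_Of_Fuel"
    by (cases "reversing n 5 g1 g2") simp_all
  assume "reversing n 5 g1 g2 = Reversed c d"
  with cube have cube_cd: "case complement n s r of None \<Rightarrow> False | Some (f3, h3) \<Rightarrow>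
      (case reversing n 5 f3 (f1 @ c) of
         Reversed e e' \<Rightarrow> e' = [] \<and> reversing n 5 (h2 @ d) (h3 @ e) = Reversed [] []
       | _ \<Rightarrow> False)"
    by simp
  then obtain f3 h3 where c3: "complement n s r = Some (f3, h3)"
    by (cases "complement n s r") auto
  with cube_cd obtain e where e1: "reversing n 5 f3 (f1 @ c) = Reversed e []"
    and e2: "reversing n 5 (h2 @ d) (h3 @ e) = Reversed [] []"
    by (cases "reversing n 5 f3 (f1 @ c)") simp_all
  have "sbeq n (f1 @ c) (f3 @ e)"
    using sbeq.sym[OF reversing_sbeq[OF e1]] by simp
  moreover have "sbeq n (h2 @ d) (h3 @ e)"
    using reversing_sbeq[OF e2] by simp
  ultimately show "\<exists>f3 h3 e. complement n s r = Some (f3, h3) \<and>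
      sbeq n (f1 @ c) (f3 @ e) \<and> sbeq n (h2 @ d) (h3 @ e)"
    using c3 by blast
qed

lemma factors_via_complement_refl: "factors_via_complement n s u s u"
  unfolding factors_via_complement_def using complement_self sbeq.refl by fastforce

lemma factors_via_complement_swap:
  "factors_via_complement n s u t v \<Longrightarrow> factors_via_complement n t v s u"
  unfolding factors_via_complement_def using complement_swap by blast

lemma factors_via_complement_rels:
  assumes "(l, r) \<in> rels n" and "p @ l @ q = s # u" and "p @ r @ q = t # v"
  shows "factors_via_complement n s u t v"
proof (cases p)
  case Nil
  with assms rels_nonempty obtain f g where "l = s # f" "r = t # g" "u = f @ q" "v = g @ q"
    by (metis Cons_eq_append_conv append_self_conv2)
  then show ?thesis
    using assms(1) rels_complement sbeq.refl unfolding factors_via_complement_def by blast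
next
  case (Cons p0 p')
  with assms have "s = t" "sbeq n u v"
    using sbeq.step[of l r n p' q] by auto
  then show ?thesis
    using complement_self sbeq.refl unfolding factors_via_complement_def by fastforce
qed

lemma factors_via_complement_trans:
  assumes shorter: "\<And>s u t v. length u < L \<Longrightarrow> sbeq n (s # u) (t # v) \<Longrightarrow>
      factors_via_complement n s u t v"
    and "length v \<le> L"
    and "factors_via_complement n s u t v" and "factors_via_complement n t v r w"
  shows "factors_via_complement n s u r w"
proof -
  obtain f1 g1 z1 where c1: "complement n s t = Some (f1, g1)"
    and u1: "sbeq n u (f1 @ z1)" and v1: "sbeq n v (g1 @ z1)"
    using assms(3) unfolding factors_via_complement_def by blast
  obtain g2 h2 z2 where c2: "complement n t r = Some (g2, h2)"
    and v2: "sbeq n v (g2 @ z2)" and w2: "sbeq n w (h2 @ z2)"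
    using assms(4) unfolding factors_via_complement_def by blast
  have g12: "sbeq n (g1 @ z1) (g2 @ z2)"
    using sbeq.sym[OF v1] v2 by (rule sbeq.trans)
  have "length (g1 @ z1) \<le> L"
    using sbeq_length[OF v1] assms(2) by simp
  note complete = reversing_complete[OF shorter this g12, of 5]
  then obtain c d where rev12: "reversing n 5 g1 g2 = Reversed c d"
    using cube_condition_reversing(1)[OF c1 c2] by (cases "reversing n 5 g1 g2") auto
  then obtain z where z1: "sbeq n z1 (c @ z)" and z2: "sbeq n z2 (d @ z)"
    using complete by blast
  obtain f3 h3 e where c3: "complement n s r = Some (f3, h3)"
    and e1: "sbeq n (f1 @ c) (f3 @ e)" and e2: "sbeq n (h2 @ d) (h3 @ e)"
    using cube_condition_reversing(2)[OF c1 c2 rev12] by blast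
  have "sbeq n u (f1 @ c @ z)"
    using u1 sbeq_append_left[OF z1] by (rule sbeq.trans)
  also have "sbeq n \<dots> (f3 @ e @ z)"
    using sbeq_append_right[OF e1, of z] by simp
  finally have u3: "sbeq n u (f3 @ e @ z)" .
  have "sbeq n w (h2 @ d @ z)"
    using w2 sbeq_append_left[OF z2] by (rule sbeq.trans)
  also have "sbeq n \<dots> (h3 @ e @ z)"
    using sbeq_append_right[OF e2, of z] by simp
  finally show ?thesis
    using c3 u3 unfolding factors_via_complement_def by blast
qed

lemma sbeq_Cons_factors_via_complement:
  assumes "sbeq n (s # u) (t # v)"
  shows "factors_via_complement n s u t v"
proof -
  have "sbeq n (s # u) (t # v) \<Longrightarrow> length u = L \<Longrightarrow> factors_via_complement n s u t v"
    for L s u t v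
  proof (induction L arbitrary: s u t v rule: less_induct)
    case (less L)
    have shorter: "length u < L \<Longrightarrow> sbeq n (s # u) (t # v) \<Longrightarrow>
        factors_via_complement n s u t v" for s u t v
      using less.IH by blast
    have "sbeq n W W' \<Longrightarrow> W = s # u \<Longrightarrow> W' = t # v \<Longrightarrow> length u = L \<Longrightarrow>
        factors_via_complement n s u t v" for W W' s u t v
    proof (induction arbitrary: s u t v rule: sbeq.induct)
      case (refl w)
      then show ?case using factors_via_complement_refl by simp
    next
      case (sym W W')
      have "length v = L"
        using sbeq_length[OF sym.hyps] sym.prems by simp
      then have "factors_via_complement n t v s u"
        using sym.IH sym.prems by blast
      then show ?case by (rule factors_via_complement_swap)
    next
      case (trans W1 W2 W3)
      obtain r x where W2: "W2 = r # x" "length x = L"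
        using sbeq_length[OF trans.hyps(1)] trans.prems by (cases W2) auto
      have "factors_via_complement n s u r x"
        using trans.IH(1) trans.prems W2 by blast
      moreover have "factors_via_complement n r x t v"
        using trans.IH(2) trans.prems W2 by blast
      ultimately show ?case
        using factors_via_complement_trans[OF shorter] W2(2) by blast
    next
      case (step l r p q)
      then show ?case using factors_via_complement_rels by blast
    qed
    then show ?case using less.prems by blast
  qed
  then show ?thesis using assms by blast
qed

subsection \<open>Greatest braid divisors\<close>

lemma braid_common_multiple:
  assumes "braid_word a" and "braid_word b" and "sbeq n (a @ u) (b @ v)"
  shows "\<exists>c d z. braid_word c \<and> braid_word d \<and> sbeq n (a @ c) (b @ d) \<and>
    sbeq n u (c @ z) \<and> sbeq n v (d @ z)"
  using assms
proof (induction "length (a @ u)" arbitrary: a b u v rule: less_induct)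
  case less
  show ?case
  proof (cases a)
    case Nil
    then have "sbeq n (a @ b) (b @ [])" "sbeq n u (b @ v)" "sbeq n v ([] @ v)"
      using less.prems(3) by (simp_all add: sbeq.refl)
    then show ?thesis
      using less.prems(2) braid_word_simps(1) by blast
  next
    case a: (Cons s a')
    show ?thesis
    proof (cases b)
      case Nil
      then have "sbeq n (a @ []) (b @ a)" "sbeq n u ([] @ u)" "sbeq n v (a @ u)"
        using sbeq.sym[OF less.prems(3)] by (simp_all add: sbeq.refl)
      then show ?thesis
        using less.prems(1) braid_word_simps(1) by blast
    next
      case b: (Cons t b')
      obtain f g z where fg: "complement n s t = Some (f, g)"
        and az: "sbeq n (a' @ u) (f @ z)" and bz: "sbeq n (b' @ v) (g @ z)"
        using sbeq_Cons_factors_via_complement[of n s "a' @ u" t "b' @ v"] less.prems(3) a b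
        unfolding factors_via_complement_def by auto
      have fg_braid: "braid_word f" "braid_word g"
        using complement_Sg_braid_word fg less.prems(1,2) a b by auto
      obtain c1 d1 z1 where c1d1: "braid_word c1" "braid_word d1" "sbeq n (a' @ c1) (f @ d1)"
        and uz1: "sbeq n u (c1 @ z1)" and zz1: "sbeq n z (d1 @ z1)"
        using less.hyps[of a' u f z] less.prems(1) a fg_braid az by auto
      have gb: "sbeq n ((g @ d1) @ z1) (b' @ v)"
        using sbeq.trans[OF sbeq_append_left[OF sbeq.sym[OF zz1], of g] sbeq.sym[OF bz]] by simp
      have "length ((g @ d1) @ z1) < length (a @ u)"
        using sbeq_length[OF gb] sbeq_length[OF less.prems(3)] b by simp
      then obtain c2 d2 z2 where c2d2: "braid_word c2" "braid_word d2"
        and gd: "sbeq n (g @ d1 @ c2) (b' @ d2)"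
        and zz2: "sbeq n z1 (c2 @ z2)" and vz2: "sbeq n v (d2 @ z2)"
        using less.hyps[of "g @ d1" z1 b' v] fg_braid c1d1 less.prems(2) b gb by auto
      have "sbeq n (s # a' @ c1 @ c2) (s # f @ d1 @ c2)"
        using sbeq_Cons[OF sbeq_append_right[OF c1d1(3), of c2]] by simp
      also have "sbeq n \<dots> (t # g @ d1 @ c2)"
        using sbeq_append_right[OF complement_sbeq[OF fg], of "d1 @ c2"] by simp
      also have "sbeq n \<dots> (t # b' @ d2)"
        using sbeq_Cons[OF gd] .
      finally have "sbeq n (a @ c1 @ c2) (b @ d2)"
        using a b by simp
      moreover have "sbeq n u ((c1 @ c2) @ z2)"
        using sbeq.trans[OF uz1 sbeq_append_left[OF zz2]] by simp
      ultimately show ?thesis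
        using c1d1 c2d2 vz2 by (intro exI[of _ "c1 @ c2"] exI[of _ d2] exI[of _ z2]) auto
    qed
  qed
qed

lemma greatest_left_braid_divisor_exists:
  assumes "valid n w"
  shows "\<exists>d. greatest_left_braid_divisor n w d"
proof -
  define divisor where
    "divisor a \<longleftrightarrow> valid n a \<and> braid_word a \<and> (\<exists>v. valid n v \<and> sbeq n w (a @ v))" for a
  have "divisor []"
    unfolding divisor_def using assms sbeq.refl by (auto simp: valid_def)
  moreover have "divisor a \<Longrightarrow> length a < Suc (length w)" for a
    unfolding divisor_def using sbeq_length by fastforce
  ultimately obtain d where "divisor d" and longest: "\<And>a. divisor a \<Longrightarrow> length a \<le> length d"
    using ex_has_greatest_nat[of divisor "[]" length "Suc (length w)"] by blast
  then obtain u where d: "valid n d" "braid_word d" and u: "valid n u" "sbeq n w (d @ u)"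
    unfolding divisor_def by blast
  have "\<exists>b. valid n b \<and> sbeq n d (a @ b)"
    if a: "valid n a" "braid_word a" "valid n v" "sbeq n w (a @ v)" for a v
  proof -
    have "sbeq n (d @ u) (a @ v)"
      using sbeq.sym[OF u(2)] a(4) by (rule sbeq.trans)
    then obtain c c' z where "braid_word c" and dc: "sbeq n (d @ c) (a @ c')"
      and uz: "sbeq n u (c @ z)"
      using braid_common_multiple[OF d(2) a(2)] by blast
    moreover have "sbeq n w ((d @ c) @ z)"
      using sbeq.trans[OF u(2) sbeq_append_left[OF uz]] by simp
    moreover have "valid n (c @ z)"
      using sbeq_valid[OF uz] u(1) by simp
    ultimately have "divisor (d @ c)"
      unfolding divisor_def using d by auto
    then have "c = []"
      using longest by fastforce
    then have "sbeq n d (a @ c')"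
      using dc by simp
    moreover from this have "valid n c'"
      using sbeq_valid d(1) by auto
    ultimately show ?thesis by blast
  qed
  then show ?thesis
    unfolding greatest_left_braid_divisor_def using d u by blast
qed

lemma greatest_left_braid_divisor_unique:
  assumes "greatest_left_braid_divisor n w d" and "greatest_left_braid_divisor n w d'"
  shows "sbeq n d d'"
proof -
  obtain b where b: "sbeq n d' (d @ b)"
    using assms unfolding greatest_left_braid_divisor_def by blast
  obtain b' where b': "sbeq n d (d' @ b')"
    using assms unfolding greatest_left_braid_divisor_def by blast
  have "b' = []"
    using sbeq_length[OF b] sbeq_length[OF b'] by simp
  with b' show ?thesis by simp
qed

lemma greatest_right_braid_divisor_iff_rev:
  "greatest_right_braid_divisor n w d \<longleftrightarrow> greatest_left_braid_divisor n (rev w) (rev d)"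
proof -
  have rev_eq: "sbeq n u (v @ a) \<longleftrightarrow> sbeq n (rev u) (rev a @ rev v)" for u v a
    by (metis rev_append sbeq_rev_iff)
  have "(\<exists>u. valid n u \<and> sbeq n w (u @ d)) \<longleftrightarrow> (\<exists>u. valid n u \<and> sbeq n (rev w) (rev d @ u))"
    by (metis rev_eq valid_rev rev_rev_ident)
  moreover have "(\<forall>a v. valid n a \<and> braid_word a \<and> valid n v \<and> sbeq n w (v @ a)
        \<longrightarrow> (\<exists>b. valid n b \<and> sbeq n d (b @ a))) \<longleftrightarrow>
      (\<forall>a v. valid n a \<and> braid_word a \<and> valid n v \<and> sbeq n (rev w) (a @ v)
        \<longrightarrow> (\<exists>b. valid n b \<and> sbeq n (rev d) (a @ b)))"
    by (metis rev_eq valid_rev braid_word_simps(4) rev_rev_ident)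
  ultimately show ?thesis
    unfolding greatest_right_braid_divisor_def greatest_left_braid_divisor_def by simp
qed

theorem corollary2p2:
  fixes n :: nat and w :: "gen list"
  assumes "n \<ge> 2" and "valid n w"
  shows "(\<exists>d. greatest_left_braid_divisor n w d) \<and>
         (\<forall>d d'. greatest_left_braid_divisor n w d \<longrightarrow> greatest_left_braid_divisor n w d' \<longrightarrow> sbeq n d d') \<and>
         (\<exists>d. greatest_right_braid_divisor n w d) \<and>
         (\<forall>d d'. greatest_right_braid_divisor n w d \<longrightarrow> greatest_right_braid_divisor n w d' \<longrightarrow> sbeq n d d')"
proof (intro conjI allI impI)
  show "\<exists>d. greatest_left_braid_divisor n w d"
    using assms(2) by (rule greatest_left_braid_divisor_exists)
  obtain d where "greatest_left_braid_divisor n (rev w) d"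
    using greatest_left_braid_divisor_exists[of n "rev w"] assms(2) by auto
  then show "\<exists>d. greatest_right_braid_divisor n w d"
    using greatest_right_braid_divisor_iff_rev[of n w "rev d"] by auto
next
  fix d d'
  show "greatest_left_braid_divisor n w d \<Longrightarrow> greatest_left_braid_divisor n w d' \<Longrightarrow> sbeq n d d'"
    by (rule greatest_left_braid_divisor_unique)
  show "greatest_right_braid_divisor n w d \<Longrightarrow> greatest_right_braid_divisor n w d' \<Longrightarrow> sbeq n d d'"
    using greatest_left_braid_divisor_unique sbeq_rev_iff greatest_right_braid_divisor_iff_rev by metis
qed

end
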